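(* Let $q$ be a prime power, $d$ a positive integer, and $m,n\ge 1$. Let $\Phi = (\phi_1, \ldots, \phi_n) : \mathbb{F}_q^m \to \mathbb{F}_q^n$ be a polynomial map with $\phi_i \in \mathbb{F}_q[x_1, \ldots, x_m]$ and $\deg \phi_i \le d$ for all $1 \le i \le n$. Suppose there is $\mu \in \mathbb{F}_q[x_1, \ldots, x_m]$ with $\sum_{a \in \Phi^{-1}(0)} \mu(a) \neq 0$. Then there exists a polynomial $P \in \mathbb{F}_q[x_1, \ldots, x_n]$ of total degree at most $(q-1)(n - m/d) + (\deg \mu)/d$ such that $P(0) \neq 0$ and $\operatorname{supp}(P) \subset \operatorname{im}(\Phi)$.
   Context: For $P \in \mathbb{F}_q[x_1,\ldots,x_n]$, $\operatorname{supp}(P) = \{x \in \mathbb{F}_q^n : P(x) \neq 0\}$. $\deg$ denotes total degree, and $\operatorname{im}(\Phi)$ is the image of $\Phi$. *)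

theory Defs
  imports Complex_Main "HOL-Library.Poly_Mapping"
begin

type_synonym ('v, 'a) mpoly = "('v \<Rightarrow>\<^sub>0 nat) \<Rightarrow>\<^sub>0 'a"

definition mon_deg :: "('v \<Rightarrow>\<^sub>0 nat) \<Rightarrow> nat" where
  "mon_deg mon = (\<Sum>i\<in>Poly_Mapping.keys mon. Poly_Mapping.lookup mon i)"

text \<open>Total degree (the zero polynomial gets degree 0).\<close>
definition tdeg :: "('v, 'a::zero) mpoly \<Rightarrow> nat" where
  "tdeg p = Max (insert 0 (mon_deg ` Poly_Mapping.keys p))"

definition mpeval :: "('v, 'a::comm_semiring_1) mpoly \<Rightarrow> ('v \<Rightarrow> 'a) \<Rightarrow> 'a" where
  "mpeval p x = (\<Sum>mon\<in>Poly_Mapping.keys p. Poly_Mapping.lookup p mon * (\<Prod>i\<in>Poly_Mapping.keys mon. x i ^ Poly_Mapping.lookup mon i))"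

definition polymap :: "('n \<Rightarrow> ('m, 'a::comm_semiring_1) mpoly) \<Rightarrow> ('m \<Rightarrow> 'a) \<Rightarrow> ('n \<Rightarrow> 'a)" where
  "polymap \<phi> x = (\<lambda>i. mpeval (\<phi> i) x)"

end

theory Submission
  imports Defs "HOL-Computational_Algebra.Polynomial" "HOL-Library.FuncSet"
begin

text \<open>Let \<open>k = q - 1\<close>. Over \<open>\<bbbF>\<^sub>q\<close> the function \<open>1 - s\<^sup>k\<close> is the indicator of \<open>s = 0\<close>, so
  \<open>Q(y) = \<Sum>\<^bsub>\<Phi>(a) = y\<^esub> \<mu>(a) = \<Sum>\<^sub>a \<mu>(a) \<Prod>\<^sub>i (1 - (\<phi>\<^sub>i(a) - y\<^sub>i)\<^sup>k)\<close> is a polynomial function of \<open>y\<close>,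
  with \<open>Q(0) \<noteq> 0\<close> and support inside \<open>im(\<Phi>)\<close>. Expanding in \<open>y\<close>, the coefficient of \<open>y\<^sup>\<beta>\<close> is
  a sum over \<open>\<bbbF>\<^sub>q\<^sup>m\<close> of a polynomial in \<open>a\<close> of degree at most \<open>deg \<mu> + d \<Sum>\<^sub>i (k - \<beta>\<^sub>i)\<close>.
  Such a sum vanishes when the degree is below \<open>m k\<close>, since every monomial then has some
  exponent below \<open>k\<close> and \<open>\<Sum>\<^sub>t t\<^sup>e = 0\<close> for \<open>e < k\<close>. Hence only monomials with
  \<open>d |\<beta>| \<le> d n k + deg \<mu> - m k\<close> survive.\<close>

definition mon_eval :: "('v::finite \<Rightarrow>\<^sub>0 nat) \<Rightarrow> ('v \<Rightarrow> 'a::comm_semiring_1) \<Rightarrow> 'a" where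
  "mon_eval m x = (\<Prod>i\<in>UNIV. x i ^ Poly_Mapping.lookup m i)"

lemma mon_deg_eq_sum_UNIV:
  "mon_deg (m :: 'v::finite \<Rightarrow>\<^sub>0 nat) = (\<Sum>i\<in>UNIV. Poly_Mapping.lookup m i)"
  unfolding mon_deg_def by (rule sum.mono_neutral_left) (auto simp: in_keys_iff)

lemma mon_deg_add: "mon_deg ((m::'v::finite \<Rightarrow>\<^sub>0 nat) + n) = mon_deg m + mon_deg n"
  unfolding mon_deg_eq_sum_UNIV by (simp add: lookup_add sum.distrib)

lemma mon_eval_add: "mon_eval (m + n) x = mon_eval m x * mon_eval n x"
  unfolding mon_eval_def by (simp add: lookup_add power_add prod.distrib)

lemma mpeval_eq_sum_mon_eval:
  assumes "finite S" "Poly_Mapping.keys p \<subseteq> S"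
  shows "mpeval (p :: ('v::finite, 'a::comm_semiring_1) mpoly) x
           = (\<Sum>m\<in>S. Poly_Mapping.lookup p m * mon_eval m x)"
proof -
  have "(\<Prod>i\<in>Poly_Mapping.keys m. x i ^ Poly_Mapping.lookup m i) = mon_eval m x" for m
    unfolding mon_eval_def by (rule prod.mono_neutral_left) (auto simp: in_keys_iff)
  then show ?thesis
    unfolding mpeval_def using assms
    by (simp, intro sum.mono_neutral_left) (auto simp: in_keys_iff)
qed

lemma mpeval_add:
  "mpeval (p + q :: ('v::finite, 'a::comm_semiring_1) mpoly) x = mpeval p x + mpeval q x"
proof -
  let ?S = "Poly_Mapping.keys p \<union> Poly_Mapping.keys q"
  have "mpeval (p + q) x = (\<Sum>m\<in>?S. Poly_Mapping.lookup (p + q) m * mon_eval m x)"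
    using keys_add[of p q] by (intro mpeval_eq_sum_mon_eval) auto
  also have "\<dots> = mpeval p x + mpeval q x"
    by (simp add: mpeval_eq_sum_mon_eval[where S = ?S] lookup_add distrib_right sum.distrib)
  finally show ?thesis .
qed

lemma mpeval_zero: "mpeval 0 x = 0"
  by (simp add: mpeval_def)

lemma mpeval_single:
  "mpeval (Poly_Mapping.single m c :: ('v::finite, 'a::comm_semiring_1) mpoly) x = c * mon_eval m x"
  by (simp add: mpeval_eq_sum_mon_eval[where S = "{m}"])

lemma tdeg_le_iff: "tdeg p \<le> D \<longleftrightarrow> (\<forall>m\<in>Poly_Mapping.keys p. mon_deg m \<le> D)"
  unfolding tdeg_def by (subst Max_le_iff) auto

text \<open>A list of (monomial, coefficient) pairs rather than an \<open>mpoly\<close> witnesses a polynomial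
  function, so that closure under products needs no multiplication of \<open>mpoly\<close>s.\<close>

definition poly_fun :: "nat \<Rightarrow> (('v::finite \<Rightarrow> 'a::comm_semiring_1) \<Rightarrow> 'a) \<Rightarrow> bool" where
  "poly_fun D f \<longleftrightarrow> (\<exists>L. (\<forall>(m, c)\<in>set L. mon_deg m \<le> D) \<and> f = (\<lambda>x. \<Sum>(m, c)\<leftarrow>L. c * mon_eval m x))"

lemma poly_fun_mono: "poly_fun D f \<Longrightarrow> D \<le> D' \<Longrightarrow> poly_fun D' f"
  unfolding poly_fun_def by fastforce

lemma poly_fun_const: "poly_fun 0 (\<lambda>_. c)"
  unfolding poly_fun_def
  by (rule exI[of _ "[(0, c)]"]) (auto simp: mon_deg_def mon_eval_def)

lemma mon_eval_single_1: "mon_eval (Poly_Mapping.single i 1) x = x i"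
proof -
  have "mon_eval (Poly_Mapping.single i 1) x = (\<Prod>j\<in>UNIV. if j = i then x i else 1)"
    unfolding mon_eval_def by (intro prod.cong) (auto simp: lookup_single when_def)
  also have "\<dots> = x i"
    by (subst prod.delta) auto
  finally show ?thesis .
qed

lemma poly_fun_var: "poly_fun 1 (\<lambda>x. x i)"
  unfolding poly_fun_def
  by (rule exI[of _ "[(Poly_Mapping.single i 1, 1)]"]) (simp add: mon_deg_def fun_eq_iff mon_eval_single_1[simplified])

lemma poly_fun_add: "poly_fun D f \<Longrightarrow> poly_fun D g \<Longrightarrow> poly_fun D (\<lambda>x. f x + g x)"
  unfolding poly_fun_def
proof (elim exE conjE)
  fix L1 L2 :: "(('a \<Rightarrow>\<^sub>0 nat) \<times> 'b) list"
  assume "\<forall>(m, c)\<in>set L1. mon_deg m \<le> D" "\<forall>(m, c)\<in>set L2. mon_deg m \<le> D"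
    and "f = (\<lambda>x. \<Sum>(m, c)\<leftarrow>L1. c * mon_eval m x)" "g = (\<lambda>x. \<Sum>(m, c)\<leftarrow>L2. c * mon_eval m x)"
  then show "\<exists>L. (\<forall>(m, c)\<in>set L. mon_deg m \<le> D)
                \<and> (\<lambda>x. f x + g x) = (\<lambda>x. \<Sum>(m, c)\<leftarrow>L. c * mon_eval m x)"
    by (intro exI[of _ "L1 @ L2"]) auto
qed

lemma sum_list_mon_eval_mult:
  "(\<Sum>(m, c)\<leftarrow>concat (map (\<lambda>(m, c). map (\<lambda>(n, e). (m + n, c * e)) L2) L1). c * mon_eval m x)
   = (\<Sum>(m, c)\<leftarrow>L1. c * mon_eval m x) * (\<Sum>(m, c)\<leftarrow>L2. c * mon_eval m x)"
proof (induction L1)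
  case (Cons a L1)
  have "(\<Sum>(n, e)\<leftarrow>L2. snd a * e * mon_eval (fst a + n) x)
          = snd a * mon_eval (fst a) x * (\<Sum>(m, c)\<leftarrow>L2. c * mon_eval m x)"
    by (induction L2) (auto simp: mon_eval_add algebra_simps)
  with Cons show ?case by (simp add: o_def distrib_right case_prod_unfold)
qed simp

lemma poly_fun_mult: "poly_fun D1 f \<Longrightarrow> poly_fun D2 g \<Longrightarrow> poly_fun (D1 + D2) (\<lambda>x. f x * g x)"
  unfolding poly_fun_def
proof (elim exE conjE)
  fix L1 L2 :: "(('a \<Rightarrow>\<^sub>0 nat) \<times> 'b) list"
  assume "\<forall>(m, c)\<in>set L1. mon_deg m \<le> D1" "\<forall>(m, c)\<in>set L2. mon_deg m \<le> D2"
    and "f = (\<lambda>x. \<Sum>(m, c)\<leftarrow>L1. c * mon_eval m x)" "g = (\<lambda>x. \<Sum>(m, c)\<leftarrow>L2. c * mon_eval m x)"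
  then show "\<exists>L. (\<forall>(m, c)\<in>set L. mon_deg m \<le> D1 + D2)
                \<and> (\<lambda>x. f x * g x) = (\<lambda>x. \<Sum>(m, c)\<leftarrow>L. c * mon_eval m x)"
    by (intro exI[of _ "concat (map (\<lambda>(m, c). map (\<lambda>(n, e). (m + n, c * e)) L2) L1)"])
       (fastforce simp: sum_list_mon_eval_mult mon_deg_add intro: add_mono)
qed

lemma poly_fun_sum:
  "finite S \<Longrightarrow> (\<And>i. i \<in> S \<Longrightarrow> poly_fun D (f i)) \<Longrightarrow> poly_fun D (\<lambda>x. \<Sum>i\<in>S. f i x)"
proof (induction S rule: finite_induct)
  case empty
  then show ?case using poly_fun_mono[OF poly_fun_const[of 0]] by simp
qed (simp add: poly_fun_add)

lemma poly_fun_prod: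
  "finite S \<Longrightarrow> (\<And>i. i \<in> S \<Longrightarrow> poly_fun (D i) (f i)) \<Longrightarrow> poly_fun (\<Sum>i\<in>S. D i) (\<lambda>x. \<Prod>i\<in>S. f i x)"
proof (induction S rule: finite_induct)
  case empty
  then show ?case using poly_fun_const[of 1] by simp
qed (simp add: poly_fun_mult)

lemma poly_fun_power: "poly_fun D f \<Longrightarrow> poly_fun (e * D) (\<lambda>x. f x ^ e)"
proof (induction e)
  case 0
  then show ?case using poly_fun_const[of 1] by simp
qed (simp add: poly_fun_mult)

lemma poly_fun_affine_power: "poly_fun D f \<Longrightarrow> poly_fun (e * D) (\<lambda>x. b + c * f x ^ e)"
  using poly_fun_add[OF poly_fun_mono[OF poly_fun_const[of b]]]
        poly_fun_mult[OF poly_fun_const[of c] poly_fun_power]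
  by fastforce

lemma poly_fun_mpeval: "poly_fun (tdeg p) (mpeval (p :: ('v::finite, 'a::comm_semiring_1) mpoly))"
proof -
  obtain xs where xs: "set xs = Poly_Mapping.keys p" "distinct xs"
    using finite_distinct_list[of "Poly_Mapping.keys p"] by auto
  show ?thesis
    unfolding poly_fun_def
    using xs tdeg_le_iff[of p "tdeg p"]
    by (intro exI[of _ "map (\<lambda>m. (m, Poly_Mapping.lookup p m)) xs"])
       (auto simp: mpeval_eq_sum_mon_eval[OF finite_keys order_refl]
                   sum_list_distinct_conv_sum_set o_def)
qed

lemma poly_fun_imp_mpoly:
  assumes "poly_fun D f"
  obtains P :: "('v::finite, 'a::comm_semiring_1) mpoly" where "tdeg P \<le> D" "mpeval P = f"
proof -
  obtain L where L: "\<forall>(m, c)\<in>set L. mon_deg m \<le> D" "f = (\<lambda>x. \<Sum>(m, c)\<leftarrow>L. c * mon_eval m x)"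
    using assms unfolding poly_fun_def by blast
  define P where "P = (\<Sum>(m, c)\<leftarrow>L. Poly_Mapping.single m c)"
  have "mpeval P x = (\<Sum>(m, c)\<leftarrow>L. c * mon_eval m x)" for x
    unfolding P_def
    by (induction L) (auto simp: mpeval_zero mpeval_add mpeval_single case_prod_unfold)
  moreover have "Poly_Mapping.keys P \<subseteq> fst ` set L"
    unfolding P_def
  proof (induction L)
    case (Cons p L)
    obtain m c where p: "p = (m, c)" by fastforce
    have "Poly_Mapping.keys (Poly_Mapping.single m c) \<subseteq> {m}" by simp
    with Cons.IH show ?case
      using keys_add[of "Poly_Mapping.single m c"] by (auto simp: p)
  qed simp
  moreover have "\<forall>m\<in>fst ` set L. mon_deg m \<le> D"
    using L(1) by auto
  ultimately show thesis
    using L(2) by (intro that[of P]) (auto simp: tdeg_le_iff)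
qed

lemma two_le_card_field: "2 \<le> card (UNIV :: 'a::{finite,field} set)"
  using card_mono[of UNIV "{0::'a, 1}"] by simp

lemma power_card_minus_one_eq_1:
  fixes b :: "'a::{finite,field}"
  assumes "b \<noteq> 0"
  shows "b ^ (card (UNIV :: 'a set) - 1) = 1"
proof -
  let ?U = "UNIV - {0::'a}"
  have "bij_betw ((*) b) ?U ?U"
    by (rule bij_betwI[where g = "\<lambda>t. t / b"]) (use assms in auto)
  then have "(\<Prod>t\<in>?U. t) = b ^ card ?U * (\<Prod>t\<in>?U. t)"
    using prod.reindex_bij_betw[of "(*) b" ?U ?U "\<lambda>t. t"] by (simp add: prod.distrib)
  moreover have "(\<Prod>t\<in>?U. t) \<noteq> 0" by simp
  ultimately show ?thesis by (simp add: card_Diff_singleton)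
qed

lemma one_minus_power_card_minus_one:
  fixes s :: "'a::{finite,field}"
  shows "1 - s ^ (card (UNIV :: 'a set) - 1) = (if s = 0 then 1 else 0)"
  using power_card_minus_one_eq_1[of s] two_le_card_field[where 'a = 'a]
  by (auto simp: power_0_left)

lemma of_nat_card_field_eq_0: "of_nat (card (UNIV :: 'a::{finite,field} set)) = (0::'a)"
proof -
  have "bij_betw (\<lambda>t. t + 1) (UNIV :: 'a set) UNIV"
    by (rule bij_betwI[where g = "\<lambda>t. t - 1"]) auto
  then have "(\<Sum>t\<in>UNIV. t) = (\<Sum>t\<in>(UNIV :: 'a set). t + 1)"
    using sum.reindex_bij_betw[of "\<lambda>t. t + 1" UNIV UNIV "\<lambda>t::'a. t"] by simp
  also have "\<dots> = (\<Sum>t\<in>UNIV. t) + of_nat (card (UNIV :: 'a set))"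
    by (simp add: sum.distrib)
  finally show ?thesis by simp
qed

lemma exists_power_ne_1:
  assumes "0 < e" "e < card (UNIV :: 'a set) - 1"
  obtains b :: "'a::{finite,field}" where "b \<noteq> 0" "b ^ e \<noteq> 1"
proof (rule ccontr)
  let ?p = "monom (1::'a) e - 1"
  assume "\<not> thesis"
  then have roots: "UNIV - {0} \<subseteq> {x. poly ?p x = 0}"
    using that by (auto simp: poly_monom)
  have "?p \<noteq> 0"
  proof
    assume "?p = 0"
    then have "coeff ?p e = 0" by simp
    with assms(1) show False by (simp add: coeff_monom)
  qed
  moreover have "degree ?p \<le> e"
    by (rule order_trans[OF degree_diff_le_max]) (auto simp: degree_monom_le)
  ultimately have "card {x. poly ?p x = 0} \<le> e"
    using card_poly_roots_bound[of ?p] by simp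
  moreover have "card (UNIV - {0::'a}) \<le> card {x. poly ?p x = 0}"
    using roots by (intro card_mono) auto
  ultimately show False
    using assms(2) by (simp add: card_Diff_singleton)
qed

lemma sum_UNIV_power_eq_0:
  assumes "e < card (UNIV :: 'a::{finite,field} set) - 1"
  shows "(\<Sum>t\<in>(UNIV::'a set). t ^ e) = 0"
proof (cases "e = 0")
  case True
  then show ?thesis using of_nat_card_field_eq_0[where 'a = 'a] by simp
next
  case False
  then obtain b :: 'a where b: "b \<noteq> 0" "b ^ e \<noteq> 1"
    using exists_power_ne_1 assms by blast
  have "bij_betw ((*) b) (UNIV :: 'a set) UNIV"
    by (rule bij_betwI[where g = "\<lambda>t. t / b"]) (use b in auto)
  then have "(\<Sum>t\<in>UNIV. t ^ e) = b ^ e * (\<Sum>t\<in>(UNIV::'a set). t ^ e)"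
    using sum.reindex_bij_betw[of "(*) b" UNIV UNIV "\<lambda>t::'a. t ^ e"]
    by (simp add: power_mult_distrib sum_distrib_left)
  then have "(b ^ e - 1) * (\<Sum>t\<in>(UNIV::'a set). t ^ e) = 0"
    by (simp add: algebra_simps)
  with b show ?thesis by simp
qed

lemma sum_UNIV_fun_split_coordinate:
  fixes f :: "('v::finite \<Rightarrow> 'a::finite) \<Rightarrow> 'b::comm_monoid_add"
  shows "(\<Sum>x\<in>UNIV. f x) = (\<Sum>x\<in>{x. x i = c}. \<Sum>t\<in>UNIV. f (x(i := t)))"
proof -
  let ?Z = "{x::'v \<Rightarrow> 'a. x i = c}"
  have "bij_betw (\<lambda>(x, t). x(i := t)) (?Z \<times> UNIV) UNIV"
  proof (rule bij_betwI[where g = "\<lambda>y. (y(i := c), y i)"])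
    show "(\<lambda>y. (y(i := c), y i)) ((\<lambda>(x, t). x(i := t)) p) = p" if "p \<in> ?Z \<times> UNIV" for p
      using that by (cases p) (auto simp: fun_eq_iff)
  qed auto
  then have "(\<Sum>x\<in>UNIV. f x) = (\<Sum>(x, t)\<in>?Z \<times> UNIV. f (x(i := t)))"
    using sum.reindex_bij_betw[of "\<lambda>(x, t). x(i := t)" "?Z \<times> UNIV" UNIV f]
    by (simp add: case_prod_unfold)
  then show ?thesis
    by (simp add: sum.cartesian_product)
qed

lemma sum_mon_eval_eq_0:
  fixes m :: "'v::finite \<Rightarrow>\<^sub>0 nat"
  assumes "mon_deg m < card (UNIV :: 'v set) * (card (UNIV :: 'a::{finite,field} set) - 1)"
  shows "(\<Sum>x\<in>UNIV. mon_eval m (x :: 'v \<Rightarrow> 'a)) = 0"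
proof -
  let ?k = "card (UNIV :: 'a set) - 1"
  obtain i where i: "Poly_Mapping.lookup m i < ?k"
  proof (rule ccontr)
    assume "\<not> thesis"
    then have "(\<Sum>i\<in>(UNIV::'v set). ?k) \<le> (\<Sum>i\<in>UNIV. Poly_Mapping.lookup m i)"
      using that by (intro sum_mono) (meson not_less)
    then show False
      using assms by (simp add: mon_deg_eq_sum_UNIV mult.commute)
  qed
  define A where "A x = (\<Prod>j\<in>UNIV - {i}. (x::'v \<Rightarrow> 'a) j ^ Poly_Mapping.lookup m j)" for x
  have "mon_eval m (x(i := t)) = t ^ Poly_Mapping.lookup m i * A x" for x t
    unfolding mon_eval_def A_def by (subst prod.remove[of _ i]) auto
  then have "(\<Sum>x\<in>UNIV. mon_eval m x) = (\<Sum>x\<in>{x. x i = 0}. A x * (\<Sum>t\<in>UNIV. t ^ Poly_Mapping.lookup m i))"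
    by (simp add: sum_UNIV_fun_split_coordinate[where i = i and c = 0] sum_distrib_left mult.commute)
  then show ?thesis
    using sum_UNIV_power_eq_0[OF i] by simp
qed

lemma poly_fun_sum_UNIV_eq_0:
  assumes "poly_fun D (f :: ('v::finite \<Rightarrow> 'a::{finite,field}) \<Rightarrow> 'a)"
    and "D < card (UNIV :: 'v set) * (card (UNIV :: 'a set) - 1)"
  shows "(\<Sum>x\<in>UNIV. f x) = 0"
proof -
  obtain L where L: "\<forall>(m, c)\<in>set L. mon_deg m \<le> D" "f = (\<lambda>x. \<Sum>(m, c)\<leftarrow>L. c * mon_eval m x)"
    using assms(1) unfolding poly_fun_def by blast
  have "(\<Sum>x\<in>UNIV. \<Sum>(m, c)\<leftarrow>L. c * mon_eval m (x :: 'v \<Rightarrow> 'a)) = 0"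
    using L(1)
  proof (induction L)
    case (Cons p L)
    obtain m c where p: "p = (m, c)" by fastforce
    have "(\<Sum>x\<in>UNIV. c * mon_eval m (x :: 'v \<Rightarrow> 'a)) = 0"
      using Cons.prems assms(2) by (simp add: p sum_distrib_left[symmetric] sum_mon_eval_eq_0)
    with Cons show ?case by (simp add: p sum.distrib)
  qed simp
  with L(2) show ?thesis by simp
qed

text \<open>The coefficient of \<open>s\<^sup>j\<close> in \<open>1 - (t - s)\<^sup>k\<close>.\<close>

definition diff_power_coeff :: "nat \<Rightarrow> nat \<Rightarrow> 'a::comm_ring_1 \<Rightarrow> 'a" where
  "diff_power_coeff k j t = (if j = 0 then 1 else 0) - of_nat (k choose j) * (-1) ^ j * t ^ (k - j)"

lemma one_minus_diff_power_eq:
  fixes t s :: "'a::comm_ring_1"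
  shows "1 - (t - s) ^ k = (\<Sum>j\<le>k. diff_power_coeff k j t * s ^ j)"
proof -
  have "(t - s) ^ k = (\<Sum>j\<le>k. of_nat (k choose j) * (-s) ^ j * t ^ (k - j))"
    using binomial_ring[of "-s" t k] by simp
  also have "\<dots> = (\<Sum>j\<le>k. of_nat (k choose j) * (-1) ^ j * t ^ (k - j) * s ^ j)"
    by (intro sum.cong refl) (simp add: power_minus[of s] algebra_simps)
  finally have "(t - s) ^ k = \<dots>" .
  moreover have "(\<Sum>j\<le>k. (if j = 0 then 1 else 0) * s ^ j) = (1::'a)"
    by (induction k) auto
  ultimately show ?thesis
    unfolding diff_power_coeff_def by (simp add: left_diff_distrib sum_subtractf)
qed

lemma poly_fun_diff_power_coeff:
  "poly_fun D g \<Longrightarrow> poly_fun ((k - j) * D) (\<lambda>x. diff_power_coeff k j (g x))"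
  unfolding diff_power_coeff_def
  using poly_fun_affine_power[of D g "k - j" "if j = 0 then 1 else 0" "- (of_nat (k choose j) * (-1) ^ j)"]
  by simp

lemma sum_fiber_eq_sum_indicator:
  fixes G :: "'b::finite \<Rightarrow> 'n::finite \<Rightarrow> 'a::{finite,field}"
  shows "(\<Sum>a\<in>{a. G a = y}. f a)
           = (\<Sum>a\<in>UNIV. f a * (\<Prod>i\<in>UNIV. 1 - (G a i - y i) ^ (card (UNIV :: 'a set) - 1)))"
proof -
  have "1 - (G a i - y i) ^ (card (UNIV :: 'a set) - 1) = (if G a i = y i then 1 else 0)" for a i
    using one_minus_power_card_minus_one[of "G a i - y i"] by simp
  moreover have "(\<Prod>i\<in>UNIV. if G a i = y i then 1 else 0) = (if G a = y then 1 else (0::'a))" for a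
  proof (cases "G a = y")
    case False
    then have "(\<Prod>i\<in>UNIV. if G a i = y i then 1 else 0) = (0::'a)"
      by (intro prod_zero) (auto simp: fun_eq_iff)
    with False show ?thesis by simp
  qed simp
  ultimately have "(\<Prod>i\<in>UNIV. 1 - (G a i - y i) ^ (card (UNIV :: 'a set) - 1)) = (if G a = y then 1 else 0)" for a
    by simp
  then show ?thesis
    by (simp add: sum.inter_filter[symmetric] if_distrib[of "(*) _"] cong: if_cong)
qed

lemma sum_fiber_expansion:
  fixes G :: "'b::finite \<Rightarrow> 'n::finite \<Rightarrow> 'a::{finite,field}"
  defines "k \<equiv> card (UNIV :: 'a set) - 1"
  shows "(\<Sum>a\<in>{a. G a = y}. f a)
           = (\<Sum>\<beta>\<in>PiE UNIV (\<lambda>_. {..k}).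
                (\<Sum>a\<in>UNIV. f a * (\<Prod>i\<in>UNIV. diff_power_coeff k (\<beta> i) (G a i))) * (\<Prod>i\<in>UNIV. y i ^ \<beta> i))"
proof -
  have "(\<Sum>a\<in>{a. G a = y}. f a)
          = (\<Sum>a\<in>UNIV. \<Sum>\<beta>\<in>PiE UNIV (\<lambda>_. {..k}).
               f a * (\<Prod>i\<in>UNIV. diff_power_coeff k (\<beta> i) (G a i)) * (\<Prod>i\<in>UNIV. y i ^ \<beta> i))"
    unfolding sum_fiber_eq_sum_indicator one_minus_diff_power_eq k_def
    by (subst prod_sum_PiE) (auto simp: sum_distrib_left prod.distrib mult.assoc)
  then show ?thesis
    by (subst (asm) sum.swap) (simp add: sum_distrib_right)
qed

lemma fiber_coeff_eq_0:
  fixes G :: "('v::finite \<Rightarrow> 'a::{finite,field}) \<Rightarrow> 'n::finite \<Rightarrow> 'a"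
  defines "k \<equiv> card (UNIV :: 'a set) - 1"
  assumes "\<And>i. poly_fun d (\<lambda>a. G a i)" "poly_fun T f"
    and "T + (\<Sum>i\<in>UNIV. k - \<beta> i) * d < card (UNIV :: 'v set) * k"
  shows "(\<Sum>a\<in>UNIV. f a * (\<Prod>i\<in>UNIV. diff_power_coeff k (\<beta> i) (G a i))) = 0"
proof (rule poly_fun_sum_UNIV_eq_0)
  show "poly_fun (T + (\<Sum>i\<in>UNIV. (k - \<beta> i) * d))
                 (\<lambda>a. f a * (\<Prod>i\<in>UNIV. diff_power_coeff k (\<beta> i) (G a i)))"
    using assms(2,3) by (intro poly_fun_mult poly_fun_prod poly_fun_diff_power_coeff) auto
  show "T + (\<Sum>i\<in>UNIV. (k - \<beta> i) * d) < card (UNIV :: 'v set) * (card (UNIV :: 'a set) - 1)"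
    using assms(4) unfolding k_def by (simp add: sum_distrib_right)
qed

lemma poly_fun_sum_fiber:
  fixes G :: "('v::finite \<Rightarrow> 'a::{finite,field}) \<Rightarrow> 'n::finite \<Rightarrow> 'a"
  defines "k \<equiv> card (UNIV :: 'a set) - 1"
  assumes "d > 0" "\<And>i. poly_fun d (\<lambda>a. G a i)" "poly_fun T f"
  shows "poly_fun ((d * card (UNIV :: 'n set) * k + T - card (UNIV :: 'v set) * k) div d)
                  (\<lambda>y. \<Sum>a\<in>{a. G a = y}. f a)"
    (is "poly_fun ?D _")
proof -
  let ?B = "PiE UNIV (\<lambda>_::'n. {..k})"
  define C where "C \<beta> = (\<Sum>a\<in>UNIV. f a * (\<Prod>i\<in>UNIV. diff_power_coeff k (\<beta> i) (G a i)))" for \<beta>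
  have "poly_fun ?D (\<lambda>y. C \<beta> * (\<Prod>i\<in>UNIV. y i ^ \<beta> i))" if "\<beta> \<in> ?B" for \<beta>
  proof (cases "C \<beta> = 0")
    case False
    then have "card (UNIV :: 'v set) * k \<le> T + (\<Sum>i\<in>UNIV. k - \<beta> i) * d"
      using fiber_coeff_eq_0[where G = G and \<beta> = \<beta>, OF assms(3,4)] unfolding C_def k_def by linarith
    then have "(\<Sum>i\<in>UNIV. \<beta> i) * d + card (UNIV :: 'v set) * k
                 \<le> ((\<Sum>i\<in>UNIV. k - \<beta> i) + (\<Sum>i\<in>UNIV. \<beta> i)) * d + T"
      by (simp add: algebra_simps)
    also have "(\<Sum>i\<in>UNIV. k - \<beta> i) + (\<Sum>i\<in>UNIV. \<beta> i) = card (UNIV :: 'n set) * k"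
      using that by (simp add: sum.distrib[symmetric] PiE_iff)
    finally have "(\<Sum>i\<in>UNIV. \<beta> i) * d + card (UNIV :: 'v set) * k \<le> d * card (UNIV :: 'n set) * k + T"
      by (simp add: algebra_simps)
    then have "(\<Sum>i\<in>UNIV. \<beta> i) \<le> ?D"
      using assms(2) by (simp add: less_eq_div_iff_mult_less_eq)
    moreover have "poly_fun (0 + (\<Sum>i\<in>UNIV. \<beta> i * 1)) (\<lambda>y. C \<beta> * (\<Prod>i\<in>UNIV. y i ^ \<beta> i))"
      by (intro poly_fun_mult poly_fun_const poly_fun_prod poly_fun_power poly_fun_var) auto
    ultimately show ?thesis
      using poly_fun_mono by fastforce
  qed (use poly_fun_mono[OF poly_fun_const] in simp)
  then have "poly_fun ?D (\<lambda>y. \<Sum>\<beta>\<in>?B. C \<beta> * (\<Prod>i\<in>UNIV. y i ^ \<beta> i))"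
    by (intro poly_fun_sum finite_PiE) auto
  then show ?thesis
    unfolding C_def k_def sum_fiber_expansion .
qed

lemma sum_fiber_nonzero_imp_degree_bound:
  fixes G :: "('v::finite \<Rightarrow> 'a::{finite,field}) \<Rightarrow> 'n::finite \<Rightarrow> 'a"
  defines "k \<equiv> card (UNIV :: 'a set) - 1"
  assumes "\<And>i. poly_fun d (\<lambda>a. G a i)" "poly_fun T f"
    and "(\<Sum>a\<in>{a. G a = y}. f a) \<noteq> 0"
  shows "card (UNIV :: 'v set) * k \<le> d * card (UNIV :: 'n set) * k + T"
proof (rule ccontr)
  have "poly_fun d (\<lambda>a. G a i - y i)" for i
    using poly_fun_add[OF assms(2)[of i] poly_fun_mono[OF poly_fun_const[of "- y i"]]] by simp
  then have "poly_fun (T + (\<Sum>i\<in>(UNIV :: 'n set). k * d))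
               (\<lambda>a. f a * (\<Prod>i\<in>UNIV. 1 + (- 1) * (G a i - y i) ^ k))"
    by (intro poly_fun_mult poly_fun_prod poly_fun_affine_power assms(3)) auto
  moreover assume "\<not> ?thesis"
  ultimately have "(\<Sum>a\<in>UNIV. f a * (\<Prod>i\<in>UNIV. 1 - (G a i - y i) ^ k)) = 0"
    by (intro poly_fun_sum_UNIV_eq_0[where D = "T + (\<Sum>i\<in>(UNIV :: 'n set). k * d)"])
       (auto simp: k_def algebra_simps)
  with assms(4) show False
    unfolding k_def sum_fiber_eq_sum_indicator by simp
qed

theorem lemma2p2:
  fixes \<phi> :: "'n::finite \<Rightarrow> ('m::finite, 'a::{finite,field}) mpoly"
    and \<mu> :: "('m, 'a) mpoly"
    and d :: nat
  assumes "d > 0"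
    and "\<forall>i. tdeg (\<phi> i) \<le> d"
    and "(\<Sum>a\<in>{a. polymap \<phi> a = (\<lambda>_. 0)}. mpeval \<mu> a) \<noteq> 0"
  shows "\<exists>P :: ('n, 'a) mpoly.
           real (tdeg P) \<le> (real (card (UNIV :: 'a set)) - 1) * (real (card (UNIV :: 'n set)) - real (card (UNIV :: 'm set)) / real d)
                            + real (tdeg \<mu>) / real d
         \<and> mpeval P (\<lambda>_. 0) \<noteq> 0
         \<and> {y. mpeval P y \<noteq> 0} \<subseteq> range (polymap \<phi>)"
proof -
  define k where "k = card (UNIV :: 'a set) - 1"
  let ?N = "card (UNIV :: 'n set)" and ?M = "card (UNIV :: 'm set)" and ?T = "tdeg \<mu>"
  have components: "poly_fun d (\<lambda>a. polymap \<phi> a i)" for i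
    unfolding polymap_def using poly_fun_mpeval[of "\<phi> i"] assms(2) poly_fun_mono by blast
  obtain P :: "('n, 'a) mpoly"
    where P: "tdeg P \<le> (d * ?N * k + ?T - ?M * k) div d" "mpeval P = (\<lambda>y. \<Sum>a\<in>{a. polymap \<phi> a = y}. mpeval \<mu> a)"
    using poly_fun_sum_fiber[where G = "polymap \<phi>", OF assms(1) components poly_fun_mpeval] unfolding k_def
    by (blast elim: poly_fun_imp_mpoly)
  have "?M * k \<le> d * ?N * k + ?T"
    using sum_fiber_nonzero_imp_degree_bound[where G = "polymap \<phi>", OF components poly_fun_mpeval assms(3)]
    unfolding k_def .
  then have "real (d * ?N * k + ?T - ?M * k) / real d = real k * (real ?N - real ?M / real d) + real ?T / real d"
    using assms(1) by (simp add: of_nat_diff field_simps)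
  moreover have "real ((d * ?N * k + ?T - ?M * k) div d) \<le> real (d * ?N * k + ?T - ?M * k) / real d"
    by (rule of_nat_div_le_of_nat)
  moreover have "real k = real (card (UNIV :: 'a set)) - 1"
    using two_le_card_field[where 'a = 'a] unfolding k_def by simp
  ultimately have "real (tdeg P) \<le> (real (card (UNIV :: 'a set)) - 1) * (real ?N - real ?M / real d) + real ?T / real d"
    using P(1) by (simp add: le_trans)
  moreover have "{y. mpeval P y \<noteq> 0} \<subseteq> range (polymap \<phi>)"
  proof
    fix y
    assume "y \<in> {y. mpeval P y \<noteq> 0}"
    then have "{a. polymap \<phi> a = y} \<noteq> {}"
      using P(2) by force
    then show "y \<in> range (polymap \<phi>)"
      by blast
  qed
  ultimately show ?thesis
    using P(2) assms(3) by (intro exI[of _ P] conjI) simp_all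
qed

end
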